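(* $\mathfrak{L}(\mathrm{rtDBVA}(1))\subsetneq\mathfrak{L}(\mathrm{rtDBVA}(2))$.
   Context: $\mathfrak{L}(A)$ denotes the class of languages recognized by machines of type $A$. A real-time deterministic blind vector automaton of dimension $k$ ($\mathrm{rtDBVA}(k)$) is a 6-tuple $(Q,\Sigma,\delta,q_0,Q_a,v)$ with finite state set $Q$, initial state $q_0$, accept states $Q_a$, initial row vector $v\in\mathbb{Q}^k$ (freely chosen), and $\delta:Q\times(\Sigma\cup\{\cent,\$\})\to Q\times S$, $S$ the set of $k\times k$ rational matrices; the input $w$ is read as $\cent w\$$ left to right, one symbol per step, and $\delta(q,\sigma)=(q',M)$ means that in state $q$ reading $\sigma$ the machine goes to $q'$ and multiplies its row vector on the right by $M$. The input is accepted iff after processing $\$$ the state is in $Q_a$ and the first vector entry equals $1$. *)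

theory Defs
  imports "Jordan_Normal_Form.Matrix"
begin

datatype 'a tsym = Cent | Dollar | Sym 'a

record 'a rtdbva =
  states :: "nat set"
  init_state :: nat
  acc_states :: "nat set"
  trans :: "nat \<Rightarrow> 'a tsym \<Rightarrow> nat \<times> rat mat"
  init_vec :: "rat vec"

definition wf_rtdbva :: "nat \<Rightarrow> 'a set \<Rightarrow> 'a rtdbva \<Rightarrow> bool" where
  "wf_rtdbva k Alph M \<longleftrightarrow>
     finite (states M) \<and> init_state M \<in> states M \<and> acc_states M \<subseteq> states M \<and>
     init_vec M \<in> carrier_vec k \<and>
     (\<forall>q \<in> states M. \<forall>\<sigma> \<in> Sym ` Alph \<union> {Cent, Dollar}.
        fst (trans M q \<sigma>) \<in> states M \<and> snd (trans M q \<sigma>) \<in> carrier_mat k k)"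

definition vec_mat_mult :: "rat vec \<Rightarrow> rat mat \<Rightarrow> rat vec" where
  "vec_mat_mult v A = vec (dim_col A) (\<lambda>j. v \<bullet> col A j)"

fun run :: "'a rtdbva \<Rightarrow> nat \<times> rat vec \<Rightarrow> 'a tsym list \<Rightarrow> nat \<times> rat vec" where
  "run M c [] = c"
| "run M (q, v) (\<sigma> # xs) = run M (fst (trans M q \<sigma>), vec_mat_mult v (snd (trans M q \<sigma>))) xs"

definition accepts :: "'a rtdbva \<Rightarrow> 'a list \<Rightarrow> bool" where
  "accepts M w \<longleftrightarrow>
     (let c = run M (init_state M, init_vec M) ([Cent] @ map Sym w @ [Dollar])
      in fst c \<in> acc_states M \<and> snd c $ 0 = 1)"

definition lang :: "'a set \<Rightarrow> 'a rtdbva \<Rightarrow> 'a list set" where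
  "lang Alph M = {w \<in> lists Alph. accepts M w}"

definition rtDBVA_langs :: "nat \<Rightarrow> 'a set \<Rightarrow> 'a list set set" where
  "rtDBVA_langs k Alph = {L. \<exists>M. wf_rtdbva k Alph M \<and> L = lang Alph M}"

end

theory Submission
  imports Defs
begin

text \<open>Padding the vector and the matrices with zeros embeds dimension \<open>k\<close> into any larger
  dimension without changing the first entry, which gives the inclusion. For strictness: in
  dimension one the vector is a single rational that every step multiplies by a factor depending
  only on the state and the symbol, so a configuration is determined by its state once some
  continuation drives its entry to \<open>1\<close>. Two prefixes \<open>0\<^sup>n\<close>, \<open>0\<^sup>m\<close> with \<open>n \<noteq> m\<close> lead to the same state,
  and both \<open>0\<^sup>n2\<close> and \<open>0\<^sup>m2\<close> are accepted, so the two configurations coincide and \<open>0\<^sup>n1\<^sup>n\<close>, \<open>0\<^sup>m1\<^sup>n\<close>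
  cannot be separated. In dimension two the vector \<open>(x, 1)\<close> carries a counter that affine matrices
  increment, decrement and reset, and accepting when it ends at \<open>1\<close> separates exactly these words.\<close>

lemma run_append: "run M c (xs @ ys) = run M (run M c xs) ys"
  by (induction M c xs rule: run.induct) auto

lemma dim_vec_mat_mult [simp]: "dim_vec (vec_mat_mult v A) = dim_col A"
  by (simp add: vec_mat_mult_def)

lemma run_in_configs:
  assumes "wf_rtdbva k Alph M" "q \<in> states M" "dim_vec v = k"
    "set xs \<subseteq> Sym ` Alph \<union> {Cent, Dollar}"
  shows "fst (run M (q, v) xs) \<in> states M \<and> dim_vec (snd (run M (q, v) xs)) = k"
  using assms(2-4)
proof (induction xs arbitrary: q v)
  case (Cons s xs)
  then have "fst (trans M q s) \<in> states M" "snd (trans M q s) \<in> carrier_mat k k"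
    using assms(1) unfolding wf_rtdbva_def by auto
  with Cons show ?case by simp
qed simp

lemma run_init_in_configs:
  assumes "wf_rtdbva k Alph M" "set xs \<subseteq> Sym ` Alph \<union> {Cent, Dollar}"
  shows "fst (run M (init_state M, init_vec M) xs) \<in> states M \<and>
    dim_vec (snd (run M (init_state M, init_vec M) xs)) = k"
  using assms by (intro run_in_configs) (auto simp: wf_rtdbva_def)

definition pad_vec :: "nat \<Rightarrow> rat vec \<Rightarrow> rat vec" where
  "pad_vec n v = vec n (\<lambda>i. if i < dim_vec v then v $ i else 0)"

definition pad_mat :: "nat \<Rightarrow> rat mat \<Rightarrow> rat mat" where
  "pad_mat n A = mat n n (\<lambda>(i, j). if i < dim_row A \<and> j < dim_col A then A $$ (i, j) else 0)"

lemma vec_mat_mult_pad: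
  assumes "dim_vec v = k" "A \<in> carrier_mat k k" "k \<le> n"
  shows "vec_mat_mult (pad_vec n v) (pad_mat n A) = pad_vec n (vec_mat_mult v A)"
proof (rule eq_vecI)
  fix j assume "j < dim_vec (pad_vec n (vec_mat_mult v A))"
  then have j: "j < n" by (simp add: pad_vec_def)
  have "vec_mat_mult (pad_vec n v) (pad_mat n A) $ j =
      (\<Sum>i<n. (if i < k then v $ i else 0) * (if i < k \<and> j < k then A $$ (i, j) else 0))"
    using assms j by (simp add: vec_mat_mult_def scalar_prod_def pad_vec_def pad_mat_def
        atLeast0LessThan)
  also have "\<dots> = (\<Sum>i<k. (if i < k then v $ i else 0) * (if i < k \<and> j < k then A $$ (i, j) else 0))"
    using assms(3) by (intro sum.mono_neutral_right) auto
  also have "\<dots> = pad_vec n (vec_mat_mult v A) $ j"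
    using assms j by (simp add: vec_mat_mult_def scalar_prod_def pad_vec_def atLeast0LessThan)
  finally show "vec_mat_mult (pad_vec n v) (pad_mat n A) $ j = pad_vec n (vec_mat_mult v A) $ j" .
qed (simp add: pad_vec_def pad_mat_def)

definition pad_rtdbva :: "nat \<Rightarrow> 'a rtdbva \<Rightarrow> 'a rtdbva" where
  "pad_rtdbva n M = M\<lparr>trans := (\<lambda>q s. (fst (trans M q s), pad_mat n (snd (trans M q s)))),
     init_vec := pad_vec n (init_vec M)\<rparr>"

lemma pad_rtdbva_simps [simp]:
  "states (pad_rtdbva n M) = states M"
  "init_state (pad_rtdbva n M) = init_state M"
  "acc_states (pad_rtdbva n M) = acc_states M"
  "trans (pad_rtdbva n M) q s = (fst (trans M q s), pad_mat n (snd (trans M q s)))"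
  "init_vec (pad_rtdbva n M) = pad_vec n (init_vec M)"
  by (simp_all add: pad_rtdbva_def)

lemma wf_pad_rtdbva:
  assumes "wf_rtdbva k Alph M"
  shows "wf_rtdbva n Alph (pad_rtdbva n M)"
  using assms unfolding wf_rtdbva_def by (simp add: pad_vec_def pad_mat_def)

lemma run_pad_rtdbva:
  assumes "wf_rtdbva k Alph M" "k \<le> n" "q \<in> states M" "dim_vec v = k"
    "set xs \<subseteq> Sym ` Alph \<union> {Cent, Dollar}"
  shows "run (pad_rtdbva n M) (q, pad_vec n v) xs =
    (fst (run M (q, v) xs), pad_vec n (snd (run M (q, v) xs)))"
  using assms(3-5)
proof (induction xs arbitrary: q v)
  case (Cons s xs)
  then have "fst (trans M q s) \<in> states M" "snd (trans M q s) \<in> carrier_mat k k"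
    using assms(1) unfolding wf_rtdbva_def by auto
  with Cons assms(2) show ?case by (simp add: vec_mat_mult_pad)
qed simp

text \<open>For \<open>k = 0\<close> the entry tested for acceptance is an unspecified out-of-range value, which
  padding would replace by \<open>0\<close>; hence \<open>0 < k\<close>.\<close>

lemma lang_pad_rtdbva:
  assumes "wf_rtdbva k Alph M" "0 < k" "k \<le> n"
  shows "lang Alph (pad_rtdbva n M) = lang Alph M"
proof -
  have "accepts (pad_rtdbva n M) w \<longleftrightarrow> accepts M w" if "w \<in> lists Alph" for w
  proof -
    let ?c = "run M (init_state M, init_vec M) ([Cent] @ map Sym w @ [Dollar])"
    have tape: "set ([Cent] @ map Sym w @ [Dollar]) \<subseteq> Sym ` Alph \<union> {Cent, Dollar}"
      using that by auto
    have "run (pad_rtdbva n M) (init_state M, pad_vec n (init_vec M)) ([Cent] @ map Sym w @ [Dollar])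
        = (fst ?c, pad_vec n (snd ?c))"
      using assms tape by (intro run_pad_rtdbva) (auto simp: wf_rtdbva_def)
    moreover have "pad_vec n (snd ?c) $ 0 = snd ?c $ 0"
      using assms run_init_in_configs[OF assms(1) tape] by (simp add: pad_vec_def)
    ultimately show ?thesis
      unfolding accepts_def Let_def by simp
  qed
  then show ?thesis unfolding lang_def by blast
qed

lemma rtDBVA_langs_mono:
  assumes "0 < k" "k \<le> n"
  shows "rtDBVA_langs k Alph \<subseteq> rtDBVA_langs n Alph"
proof
  fix L assume "L \<in> rtDBVA_langs k Alph"
  then obtain M where "wf_rtdbva k Alph M" "L = lang Alph M"
    unfolding rtDBVA_langs_def by blast
  with assms show "L \<in> rtDBVA_langs n Alph"
    unfolding rtDBVA_langs_def by (metis (mono_tags) mem_Collect_eq wf_pad_rtdbva lang_pad_rtdbva)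
qed

fun gain :: "'a rtdbva \<Rightarrow> nat \<Rightarrow> 'a tsym list \<Rightarrow> rat" where
  "gain M q [] = 1"
| "gain M q (s # xs) = snd (trans M q s) $$ (0, 0) * gain M (fst (trans M q s)) xs"

lemma run_dim1:
  assumes "wf_rtdbva 1 Alph M" "q \<in> states M" "dim_vec v = 1"
    "set xs \<subseteq> Sym ` Alph \<union> {Cent, Dollar}"
  shows "snd (run M (q, v) xs) $ 0 = v $ 0 * gain M q xs"
  using assms(2-4)
proof (induction xs arbitrary: q v)
  case (Cons s xs)
  then have "fst (trans M q s) \<in> states M" and A: "snd (trans M q s) \<in> carrier_mat 1 1"
    using assms(1) unfolding wf_rtdbva_def by auto
  moreover have "vec_mat_mult v (snd (trans M q s)) $ 0 = v $ 0 * snd (trans M q s) $$ (0, 0)"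
    using Cons.prems(2) A by (simp add: vec_mat_mult_def scalar_prod_def)
  ultimately show ?case using Cons A by simp
qed simp

lemma dim1_config_determined_by_acceptance:
  assumes "wf_rtdbva 1 Alph M" "q \<in> states M" "dim_vec v = 1" "dim_vec v' = 1"
    "set xs \<subseteq> Sym ` Alph \<union> {Cent, Dollar}"
    "snd (run M (q, v) xs) $ 0 = 1" "snd (run M (q, v') xs) $ 0 = 1"
  shows "v = v'"
proof -
  have "v $ 0 * gain M q xs = 1" "v' $ 0 * gain M q xs = 1"
    using assms run_dim1[OF assms(1,2)] by simp_all
  then have "v $ 0 = v' $ 0"
    by (metis mult_cancel_right mult_zero_left zero_neq_one)
  with assms(3,4) show ?thesis by (intro eq_vecI) auto
qed

lemma not_in_rtDBVA_langs_1:
  assumes "{a, b, c} \<subseteq> Alph"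
    and "\<And>n. replicate n a @ [c] \<in> L"
    and "\<And>n k. replicate n a @ replicate k b \<in> L \<longleftrightarrow> n = k"
  shows "L \<notin> rtDBVA_langs 1 Alph"
proof
  assume "L \<in> rtDBVA_langs 1 Alph"
  then obtain M where M: "wf_rtdbva 1 Alph M" and L: "L = lang Alph M"
    unfolding rtDBVA_langs_def by blast
  define conf where "conf k = run M (init_state M, init_vec M) (Cent # replicate k (Sym a))" for k
  have conf: "fst (conf k) \<in> states M" "dim_vec (snd (conf k)) = 1" for k
  proof -
    have "set (Cent # replicate k (Sym a)) \<subseteq> Sym ` Alph \<union> {Cent, Dollar}"
      using assms(1) by auto
    from run_init_in_configs[OF M this] show "fst (conf k) \<in> states M" "dim_vec (snd (conf k)) = 1"
      unfolding conf_def by blast+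
  qed
  have L_iff: "replicate k a @ ys \<in> L \<longleftrightarrow>
      (let c' = run M (conf k) (map Sym ys @ [Dollar]) in fst c' \<in> acc_states M \<and> snd c' $ 0 = 1)"
    if "ys \<in> lists Alph" for k ys
    using that assms(1) unfolding L lang_def accepts_def conf_def
    by (simp add: in_lists_conv_set set_replicate_conv_if flip: run_append)
  have "\<not> inj (\<lambda>k. fst (conf k))"
  proof
    assume "inj (\<lambda>k. fst (conf k))"
    moreover have "finite (range (\<lambda>k. fst (conf k)))"
      using M conf(1) unfolding wf_rtdbva_def by (meson finite_subset image_subsetI)
    ultimately show False using finite_imageD by blast
  qed
  then obtain n m where "n \<noteq> m" and same_state: "fst (conf n) = fst (conf m)"
    unfolding inj_def by blast
  have accepts_c: "snd (run M (conf k) (map Sym [c] @ [Dollar])) $ 0 = 1" for k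
    using L_iff[of "[c]" k] assms(1,2) by (simp add: Let_def)
  have "snd (conf n) = snd (conf m)"
  proof (rule dim1_config_determined_by_acceptance[OF M conf(1) conf(2) conf(2)])
    show "set (map Sym [c] @ [Dollar]) \<subseteq> Sym ` Alph \<union> {Cent, Dollar}"
      using assms(1) by auto
    show "snd (run M (fst (conf n), snd (conf n)) (map Sym [c] @ [Dollar])) $ 0 = 1"
      using accepts_c[of n] by (simp only: prod.collapse)
    show "snd (run M (fst (conf n), snd (conf m)) (map Sym [c] @ [Dollar])) $ 0 = 1"
      using accepts_c[of m] by (simp only: same_state prod.collapse)
  qed
  with same_state have same_conf: "conf n = conf m" by (simp add: prod_eq_iff)
  have b_word: "replicate n b \<in> lists Alph" using assms(1) by auto
  have "replicate n a @ replicate n b \<in> L \<longleftrightarrow> replicate m a @ replicate n b \<in> L"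
    unfolding L_iff[OF b_word] same_conf by (rule refl)
  with assms(3)[of n n] assms(3)[of m n] \<open>n \<noteq> m\<close> show False by simp
qed

fun counter :: "rat \<Rightarrow> nat list \<Rightarrow> rat" where
  "counter x [] = x"
| "counter x (0 # w) = counter (x + 1) w"
| "counter x (Suc 0 # w) = counter (x - 1) w"
| "counter x (_ # w) = counter 1 w"

lemma counter_replicate_0: "counter x (replicate n 0 @ w) = counter (x + of_nat n) w"
  by (induction n arbitrary: x) (simp_all add: algebra_simps)

lemma counter_replicate_1: "counter x (replicate n (Suc 0)) = x - of_nat n"
  by (induction n arbitrary: x) (simp_all add: algebra_simps)

lemma counter_2: "counter x [2] = 1"
  by (simp add: numeral_2_eq_2)

definition counter_vec :: "rat \<Rightarrow> rat vec" where
  "counter_vec x = vec 2 (\<lambda>i. if i = 0 then x else 1)"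

definition affine_mat :: "rat \<Rightarrow> rat \<Rightarrow> rat mat" where
  "affine_mat a b = mat 2 2 (\<lambda>(i, j). if j = 0 then (if i = 0 then a else b) else if i = 1 then 1 else 0)"

lemma vec_mat_mult_affine_mat: "vec_mat_mult (counter_vec x) (affine_mat a b) = counter_vec (a * x + b)"
  by (rule eq_vecI)
    (auto simp: vec_mat_mult_def affine_mat_def counter_vec_def scalar_prod_def numeral_2_eq_2 less_Suc_eq)

fun counter_mat :: "nat tsym \<Rightarrow> rat mat" where
  "counter_mat (Sym 0) = affine_mat 1 1"
| "counter_mat (Sym (Suc 0)) = affine_mat 1 (-1)"
| "counter_mat (Sym _) = affine_mat 0 1"
| "counter_mat _ = affine_mat 1 0"

definition counter_rtdbva :: "nat rtdbva" where
  "counter_rtdbva = \<lparr>states = {0}, init_state = 0, acc_states = {0},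
     trans = (\<lambda>q s. (0, counter_mat s)), init_vec = counter_vec 1\<rparr>"

lemma wf_counter_rtdbva: "wf_rtdbva 2 Alph counter_rtdbva"
proof -
  have "counter_mat s \<in> carrier_mat 2 2" for s
    by (cases s rule: counter_mat.cases) (simp_all add: affine_mat_def)
  then show ?thesis
    by (simp add: wf_rtdbva_def counter_rtdbva_def counter_vec_def)
qed

lemma run_counter_rtdbva:
  "run counter_rtdbva (0, counter_vec x) (map Sym w) = (0, counter_vec (counter x w))"
  by (induction x w rule: counter.induct)
    (simp_all add: counter_rtdbva_def vec_mat_mult_affine_mat)

lemma accepts_counter_rtdbva: "accepts counter_rtdbva w \<longleftrightarrow> counter 1 w = 1"
proof -
  have init: "init_state counter_rtdbva = 0" "init_vec counter_rtdbva = counter_vec 1"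
    by (simp_all add: counter_rtdbva_def)
  have endmarkers: "run counter_rtdbva (0, counter_vec x) [Cent] = (0, counter_vec x)"
    "run counter_rtdbva (0, counter_vec x) [Dollar] = (0, counter_vec x)" for x
    by (simp_all add: counter_rtdbva_def vec_mat_mult_affine_mat)
  have "run counter_rtdbva (init_state counter_rtdbva, init_vec counter_rtdbva)
      ([Cent] @ map Sym w @ [Dollar]) = (0, counter_vec (counter 1 w))"
    by (simp only: init run_append endmarkers run_counter_rtdbva)
  then show ?thesis
    by (simp add: accepts_def counter_rtdbva_def counter_vec_def)
qed

theorem theorem11:
  shows "(\<forall>Alph :: 'a set. finite Alph \<longrightarrow> rtDBVA_langs 1 Alph \<subseteq> rtDBVA_langs 2 Alph) \<and>
         (\<exists>Alph :: nat set. finite Alph \<and> rtDBVA_langs 1 Alph \<subset> rtDBVA_langs 2 Alph)"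
proof (intro conjI allI impI)
  show "rtDBVA_langs 1 Alph \<subseteq> rtDBVA_langs 2 Alph" for Alph :: "'a set"
    by (rule rtDBVA_langs_mono) simp_all
  let ?L = "lang {0, 1, 2} counter_rtdbva"
  have in_L: "w \<in> ?L \<longleftrightarrow> set w \<subseteq> {0, 1, 2} \<and> counter 1 w = 1" for w
    by (auto simp: lang_def accepts_counter_rtdbva)
  have "?L \<notin> rtDBVA_langs 1 {0, 1, 2}"
  proof (rule not_in_rtDBVA_langs_1[where a = 0 and b = "1::nat" and c = 2])
    show "replicate n 0 @ [2] \<in> ?L" for n
      unfolding in_L by (simp add: counter_replicate_0 counter_2 set_replicate_conv_if)
    show "replicate n 0 @ replicate k 1 \<in> ?L \<longleftrightarrow> n = k" for n k
      unfolding in_L by (simp add: counter_replicate_0 counter_replicate_1 set_replicate_conv_if)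
  qed simp
  moreover have "?L \<in> rtDBVA_langs 2 {0, 1, 2}"
    using wf_counter_rtdbva unfolding rtDBVA_langs_def by blast
  moreover have "rtDBVA_langs 1 {0, 1, 2} \<subseteq> rtDBVA_langs 2 {0, 1, 2 :: nat}"
    by (rule rtDBVA_langs_mono) simp_all
  ultimately show "\<exists>Alph :: nat set. finite Alph \<and> rtDBVA_langs 1 Alph \<subset> rtDBVA_langs 2 Alph"
    by (intro exI[of _ "{0, 1, 2}"]) blast
qed

end
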